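(* For all finite simple graphs $G$ and $H$, $\alpha_{\mathcal S}(G\boxtimes H)\le\alpha_{\mathcal S}(G)\,\alpha_{\mathcal S}(H)$.
   Context: The strong product $G\boxtimes H$ has vertex set $V(G)\times V(H)$, with $(i,j)\sim(i',j')$ iff ($i\sim_G i'$ and $j\sim_H j'$) or ($i\sim_G i'$ and $j=j'$) or ($i=i'$ and $j\sim_H j'$). For a graph on $n$ vertices, a weighted adjacency matrix is a real symmetric $A$ with $A_{ii}=0$ and $A_{ij}=0$ for non-adjacent $i\ne j$; $\mathcal S_n=\{\boldsymbol v\in\mathbb R^n:\langle\boldsymbol 1,\boldsymbol v\rangle=|\boldsymbol v|^2\}$ with $\boldsymbol 1$ the all-ones vector; and the spherical independence number is $\alpha_{\mathcal S}(G)=\inf_A\sup\{|\boldsymbol v|^2:\boldsymbol v\in\mathcal S_n,\ \langle\boldsymbol v,A\boldsymbol v\rangle=0\}$ over weighted adjacency matrices $A$ of $G$. *)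

theory Defs
  imports Complex_Main
begin

text \<open>A finite simple graph: vertex set = UNIV of a finite type, adjacency given by a
  symmetric irreflexive relation.\<close>
definition simple_graph :: "('a::finite \<Rightarrow> 'a \<Rightarrow> bool) \<Rightarrow> bool" where
  "simple_graph E \<longleftrightarrow> symp E \<and> irreflp E"

definition strong_product ::
  "('a \<Rightarrow> 'a \<Rightarrow> bool) \<Rightarrow> ('b \<Rightarrow> 'b \<Rightarrow> bool) \<Rightarrow> ('a \<times> 'b) \<Rightarrow> ('a \<times> 'b) \<Rightarrow> bool" where
  "strong_product E F = (\<lambda>(i, j) (i', j').
      (E i i' \<and> F j j') \<or> (E i i' \<and> j = j') \<or> (i = i' \<and> F j j'))"

definition weighted_adj :: "('a \<Rightarrow> 'a \<Rightarrow> bool) \<Rightarrow> ('a \<Rightarrow> 'a \<Rightarrow> real) \<Rightarrow> bool" where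
  "weighted_adj E A \<longleftrightarrow> (\<forall>i j. A i j = A j i) \<and> (\<forall>i. A i i = 0)
     \<and> (\<forall>i j. i \<noteq> j \<and> \<not> E i j \<longrightarrow> A i j = 0)"

definition sphS :: "('a::finite \<Rightarrow> real) set" where
  "sphS = {v. (\<Sum>i\<in>UNIV. v i) = (\<Sum>i\<in>UNIV. (v i)\<^sup>2)}"

definition quad_form :: "('a::finite \<Rightarrow> 'a \<Rightarrow> real) \<Rightarrow> ('a \<Rightarrow> real) \<Rightarrow> real" where
  "quad_form A v = (\<Sum>i\<in>UNIV. \<Sum>j\<in>UNIV. v i * A i j * v j)"

definition sqnorm :: "('a::finite \<Rightarrow> real) \<Rightarrow> real" where
  "sqnorm v = (\<Sum>i\<in>UNIV. (v i)\<^sup>2)"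

text \<open>Spherical independence number (inf over weighted adjacency matrices of the sup of
  |v|^2 over v in S_n with <v, A v> = 0; both sets are nonempty and bounded).\<close>
definition alpha_S :: "('a::finite \<Rightarrow> 'a \<Rightarrow> bool) \<Rightarrow> real" where
  "alpha_S E = (INF A \<in> {A. weighted_adj E A}.
       SUP v \<in> {v \<in> sphS. quad_form A v = 0}. sqnorm v)"

end

theory Submission
  imports Defs
begin

(* For a weighted adjacency matrix A let s(A) = sph_null_sup A be the supremum in the definition
   of alpha_S. Rescaling vectors onto S_n shows that s(A) is the least c >= 0 such that
   (1^T u)^2 <= c |u|^2 on the null cone of A, i.e. such that c I - J is nonnegative there
   (J the all-ones matrix). Since A has zero diagonal it is zero or indefinite, so Finsler's lemma
   yields l with X - J positive semidefinite for X = s(A) I + l A; likewise Y = s(B) I + m B for H.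
   Then kron X Y - s(A) s(B) I is a weighted adjacency matrix of the strong product, and
   kron X Y - J = kron (X - J) Y + kron J (Y - J) is positive semidefinite, Kronecker products of
   psd matrices being psd. Hence its s-value is at most s(A) s(B), and taking infima over A and B
   gives the theorem. *)

subsection \<open>Quadratic forms\<close>

definition sym_mat :: "('a \<Rightarrow> 'a \<Rightarrow> real) \<Rightarrow> bool" where
  "sym_mat M \<longleftrightarrow> (\<forall>i j. M i j = M j i)"

definition psd_mat :: "('a::finite \<Rightarrow> 'a \<Rightarrow> real) \<Rightarrow> bool" where
  "psd_mat M \<longleftrightarrow> (\<forall>v. 0 \<le> quad_form M v)"

definition bilin_form :: "('a::finite \<Rightarrow> 'a \<Rightarrow> real) \<Rightarrow> ('a \<Rightarrow> real) \<Rightarrow> ('a \<Rightarrow> real) \<Rightarrow> real" where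
  "bilin_form M u x = (\<Sum>i\<in>UNIV. \<Sum>j\<in>UNIV. u i * M i j * x j)"

definition unit_vec :: "'a \<Rightarrow> 'a \<Rightarrow> real" where
  "unit_vec a = (\<lambda>k. if k = a then 1 else 0)"

lemma quad_form_add: "quad_form (\<lambda>i j. M i j + N i j) v = quad_form M v + quad_form N v"
  unfolding quad_form_def by (simp add: algebra_simps sum.distrib)

lemma quad_form_diff: "quad_form (\<lambda>i j. M i j - N i j) v = quad_form M v - quad_form N v"
  unfolding quad_form_def by (simp add: algebra_simps sum_subtractf)

lemma quad_form_cmult: "quad_form (\<lambda>i j. c * M i j) v = c * quad_form M v"
  unfolding quad_form_def by (simp add: algebra_simps sum_distrib_left)

lemma quad_form_scale: "quad_form M (\<lambda>i. c * v i) = c\<^sup>2 * quad_form M v"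
  unfolding quad_form_def by (simp add: algebra_simps sum_distrib_left power2_eq_square)

lemma quad_form_diag: "quad_form (\<lambda>i j. if i = j then c else 0) v = c * sqnorm v"
  unfolding quad_form_def sqnorm_def
  by (simp add: if_distrib[of "\<lambda>x. _ * x"] if_distrib[of "\<lambda>x. x * _"] sum_distrib_left
      power2_eq_square mult_ac cong: if_cong)

lemma quad_form_ones: "quad_form (\<lambda>_ _. 1) v = (\<Sum>i\<in>UNIV. v i)\<^sup>2"
  unfolding quad_form_def power2_eq_square sum_product by simp

lemma psd_mat_ones: "psd_mat (\<lambda>_ _. 1)"
  unfolding psd_mat_def quad_form_ones by simp

lemma quad_form_unit_vec: "quad_form M (unit_vec a) = M a a"
  unfolding quad_form_def unit_vec_def
  by (simp add: if_distrib[of "\<lambda>x. x * _"] if_distrib[of "\<lambda>x. _ * x"] cong: if_cong)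

lemma bilin_form_unit_vec: "bilin_form M (unit_vec a) (unit_vec b) = M a b"
  unfolding bilin_form_def unit_vec_def
  by (simp add: if_distrib[of "\<lambda>x. x * _"] if_distrib[of "\<lambda>x. _ * x"] cong: if_cong)

lemma bilin_form_unit_vec_right: "bilin_form M v (unit_vec a) = (\<Sum>i\<in>UNIV. v i * M i a)"
  unfolding bilin_form_def unit_vec_def by (simp add: if_distrib[of "\<lambda>x. _ * x"] cong: if_cong)

lemma quad_form_line:
  assumes "sym_mat M"
  shows "quad_form M (\<lambda>i. u i + t * x i)
           = quad_form M u + 2 * t * bilin_form M u x + t\<^sup>2 * quad_form M x"
proof -
  have expand: "(u i + t * x i) * M i j * (u j + t * x j) =
      u i * M i j * u j + t * (u i * M i j * x j) + t * (x i * M i j * u j) + t\<^sup>2 * (x i * M i j * x j)"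
    for i j by (simp add: algebra_simps power2_eq_square)
  have "(\<Sum>i\<in>UNIV. \<Sum>j\<in>UNIV. x i * M i j * u j) = bilin_form M u x"
    using assms unfolding bilin_form_def sym_mat_def
    by (subst sum.swap) (simp add: mult.commute mult.left_commute)
  then show ?thesis
    unfolding quad_form_def expand sum.distrib sum_distrib_left[symmetric]
    by (simp add: bilin_form_def)
qed

lemma sqnorm_nonneg: "0 \<le> sqnorm v"
  unfolding sqnorm_def by (simp add: sum_nonneg)

lemma sqnorm_le_card:
  assumes "v \<in> sphS"
  shows "sqnorm (v :: 'a::finite \<Rightarrow> real) \<le> real (card (UNIV :: 'a set))"
proof -
  have "sqnorm v = (\<Sum>i\<in>UNIV. v i)"
    using assms by (simp add: sphS_def sqnorm_def)
  also have "\<dots> \<le> (\<Sum>i\<in>UNIV. ((v i)\<^sup>2 + 1) / 2)"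
  proof (rule sum_mono)
    fix i
    have "0 \<le> (v i - 1)\<^sup>2" by simp
    then show "v i \<le> ((v i)\<^sup>2 + 1) / 2" by (simp add: power2_diff field_simps)
  qed
  also have "\<dots> = sqnorm v / 2 + real (card (UNIV :: 'a set)) / 2"
    by (simp add: sqnorm_def sum_divide_distrib[symmetric] sum.distrib)
  finally show ?thesis by simp
qed

lemma unit_vec_in_sphS: "unit_vec a \<in> sphS"
  unfolding sphS_def unit_vec_def by (simp add: if_distrib[of "\<lambda>x. x\<^sup>2"] cong: if_cong)

lemma sqnorm_unit_vec: "sqnorm (unit_vec a) = 1"
  unfolding sqnorm_def unit_vec_def by (simp add: if_distrib[of "\<lambda>x. x\<^sup>2"] cong: if_cong)

subsection \<open>Finsler's lemma\<close>

lemma quadratic_roots_opposite_signs: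
  fixes a b c :: real
  assumes "0 < a" "c < 0"
  obtains t1 t2 where "t1 < 0" "0 < t2" "a + 2 * t1 * b + t1\<^sup>2 * c = 0"
    "a + 2 * t2 * b + t2\<^sup>2 * c = 0" "c * (t1 * t2) = a"
proof -
  define d where "d = sqrt (b\<^sup>2 - a * c)"
  have "a * c < 0" using assms by (simp add: mult_pos_neg)
  then have d2: "d\<^sup>2 = b\<^sup>2 - a * c"
    unfolding d_def by (smt (verit) real_sqrt_pow2 zero_le_power2)
  have "\<bar>b\<bar> < d"
    unfolding d_def using real_sqrt_less_mono[of "b\<^sup>2" "b\<^sup>2 - a * c"] \<open>a * c < 0\<close> by simp
  define t1 where "t1 = (d - b) / c"
  define t2 where "t2 = (- d - b) / c"
  have ct: "c * t1 = d - b" "c * t2 = - d - b"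
    using assms by (simp_all add: t1_def t2_def)
  have root: "a + 2 * t * b + t\<^sup>2 * c = 0" if "c * t = s - b" "s\<^sup>2 = d\<^sup>2" for s t
  proof -
    have "c * (a + 2 * t * b + t\<^sup>2 * c) = (c * t)\<^sup>2 + 2 * b * (c * t) + a * c"
      by (simp add: algebra_simps power2_eq_square)
    also have "\<dots> = 0" unfolding that(1) using that(2) d2 by (simp add: algebra_simps power2_eq_square)
    finally show ?thesis using assms by simp
  qed
  have "c * (c * (t1 * t2)) = (c * t1) * (c * t2)" by (simp add: algebra_simps)
  also have "\<dots> = b\<^sup>2 - d\<^sup>2" unfolding ct by (simp add: algebra_simps power2_eq_square)
  also have "\<dots> = c * a" using d2 by simp
  finally have "c * (t1 * t2) = a" using assms by simp
  moreover have "t1 < 0" using \<open>\<bar>b\<bar> < d\<close> assms by (simp add: t1_def divide_pos_neg)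
  moreover have "0 < t2" using \<open>\<bar>b\<bar> < d\<close> assms by (simp add: t2_def divide_neg_neg)
  moreover note root[OF ct(1) refl] root[OF ct(2)]
  ultimately show ?thesis using that by simp
qed

lemma quadratic_nonneg_at_opposite_signs:
  fixes p q r t1 t2 :: real
  assumes "t1 < 0" "0 < t2"
    and "0 \<le> p + 2 * t1 * q + t1\<^sup>2 * r" "0 \<le> p + 2 * t2 * q + t2\<^sup>2 * r"
  shows "0 \<le> p - t1 * t2 * r"
proof -
  have "0 \<le> t2 * (p + 2 * t1 * q + t1\<^sup>2 * r) + (- t1) * (p + 2 * t2 * q + t2\<^sup>2 * r)"
    by (rule add_nonneg_nonneg; rule mult_nonneg_nonneg) (use assms in auto)
  also have "\<dots> = (t2 - t1) * (p - t1 * t2 * r)"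
    by (simp add: algebra_simps power2_eq_square)
  finally show ?thesis using assms by (simp add: zero_le_mult_iff)
qed

lemma finsler_cross_ineq:
  fixes F G :: "'a::finite \<Rightarrow> 'a \<Rightarrow> real"
  assumes "sym_mat F" "sym_mat G"
    and null_nonneg: "\<And>w. quad_form G w = 0 \<Longrightarrow> 0 \<le> quad_form F w"
    and "0 < quad_form G u" "quad_form G x < 0"
  shows "0 \<le> quad_form F u * (- quad_form G x) + quad_form F x * quad_form G u"
proof -
  obtain t1 t2 where t: "t1 < 0" "0 < t2"
    and "quad_form G u + 2 * t1 * bilin_form G u x + t1\<^sup>2 * quad_form G x = 0"
    and "quad_form G u + 2 * t2 * bilin_form G u x + t2\<^sup>2 * quad_form G x = 0"
    and prod: "quad_form G x * (t1 * t2) = quad_form G u"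
    using quadratic_roots_opposite_signs[OF assms(4,5)] .
  then have "quad_form G (\<lambda>i. u i + t * x i) = 0" if "t \<in> {t1, t2}" for t
    using that by (auto simp: quad_form_line[OF assms(2)])
  then have "0 \<le> quad_form F u + 2 * t * bilin_form F u x + t\<^sup>2 * quad_form F x"
    if "t \<in> {t1, t2}" for t
    using null_nonneg that by (metis quad_form_line[OF assms(1)])
  then have "0 \<le> quad_form F u - t1 * t2 * quad_form F x"
    using quadratic_nonneg_at_opposite_signs[OF t] by blast
  with assms(5) have "0 \<le> (- quad_form G x) * (quad_form F u - t1 * t2 * quad_form F x)"
    by (intro mult_nonneg_nonneg) simp_all
  also have "\<dots> = quad_form F u * (- quad_form G x) + quad_form F x * quad_form G u"
    by (simp add: algebra_simps flip: prod)
  finally show ?thesis .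
qed

lemma finsler:
  fixes F G :: "'a::finite \<Rightarrow> 'a \<Rightarrow> real"
  assumes "sym_mat F" "sym_mat G"
    and null_nonneg: "\<And>w. quad_form G w = 0 \<Longrightarrow> 0 \<le> quad_form F w"
    and pos: "0 < quad_form G u0" and neg: "quad_form G x0 < 0"
  shows "\<exists>l. psd_mat (\<lambda>i j. F i j + l * G i j)"
proof -
  let ?ratio = "\<lambda>u. - quad_form F u / quad_form G u"
  have ratio_le: "?ratio u \<le> ?ratio x" if "0 < quad_form G u" "quad_form G x < 0" for u x
  proof -
    have "quad_form F u * quad_form G x \<le> quad_form F x * quad_form G u"
      using finsler_cross_ineq[OF assms(1-3) that] by simp
    then have "quad_form F x / quad_form G x \<le> quad_form F u / quad_form G u"
      using that by (simp add: divide_simps mult.commute)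
    then show ?thesis by simp
  qed
  \<comment> \<open>The least l making F + l G nonnegative where G > 0; the cross inequality shows that
      it also works where G < 0.\<close>
  define l where "l = (SUP u \<in> {u. 0 < quad_form G u}. ?ratio u)"
  have bdd: "bdd_above (?ratio ` {u. 0 < quad_form G u})"
    using ratio_le[OF _ neg] by (intro bdd_aboveI[of _ "?ratio x0"]) blast
  have "0 \<le> quad_form F u + l * quad_form G u" for u
  proof (cases "quad_form G u" "0 :: real" rule: linorder_cases)
    case less
    have "l \<le> ?ratio u"
      unfolding l_def using pos ratio_le[OF _ less] by (intro cSUP_least) auto
    then show ?thesis using neg_le_divide_eq[OF less, of l "- quad_form F u"] by simp
  next
    case equal
    then show ?thesis using null_nonneg by simp
  next
    case greater
    have "?ratio u \<le> l"
      unfolding l_def using greater by (intro cSUP_upper bdd) simp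
    then show ?thesis using pos_divide_le_eq[OF greater, of "- quad_form F u" l] by simp
  qed
  then show ?thesis
    unfolding psd_mat_def quad_form_add quad_form_cmult by blast
qed

subsection \<open>The supremum over the spherical null cone\<close>

definition sph_null_sup :: "('a::finite \<Rightarrow> 'a \<Rightarrow> real) \<Rightarrow> real" where
  "sph_null_sup A = (SUP v \<in> {v \<in> sphS. quad_form A v = 0}. sqnorm v)"

lemma alpha_S_eq_INF_sph_null_sup:
  "alpha_S E = (INF A \<in> {A. weighted_adj E A}. sph_null_sup A)"
  unfolding alpha_S_def sph_null_sup_def ..

lemma bdd_above_sph_null:
  "bdd_above (sqnorm ` {v \<in> sphS. quad_form (A :: 'a::finite \<Rightarrow> 'a \<Rightarrow> real) v = 0})"
  using sqnorm_le_card by (intro bdd_aboveI[of _ "real (card (UNIV :: 'a set))"]) blast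

lemma sph_null_sup_upper:
  assumes "v \<in> sphS" "quad_form A v = 0"
  shows "sqnorm v \<le> sph_null_sup A"
  unfolding sph_null_sup_def using assms by (intro cSUP_upper bdd_above_sph_null) simp

lemma sph_null_sup_nonneg: "0 \<le> sph_null_sup A"
  using sph_null_sup_upper[of "\<lambda>_. 0" A] by (simp add: sphS_def quad_form_def sqnorm_def)

lemma one_le_sph_null_sup:
  assumes "\<And>i. A i i = 0"
  shows "1 \<le> sph_null_sup A"
  using sph_null_sup_upper[OF unit_vec_in_sphS, of A undefined]
  by (simp add: quad_form_unit_vec sqnorm_unit_vec assms)

lemma sum_sq_le_sph_null_sup:
  assumes "quad_form A u = 0"
  shows "(\<Sum>i\<in>UNIV. u i)\<^sup>2 \<le> sph_null_sup A * sqnorm u"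
proof (cases "sqnorm u = 0")
  case True
  then have "\<forall>i\<in>UNIV. (u i)\<^sup>2 = 0"
    unfolding sqnorm_def by (subst (asm) sum_nonneg_eq_0_iff) auto
  then show ?thesis using True by simp
next
  case False
  define s where "s = (\<Sum>i\<in>UNIV. u i)"
  define N where "N = sqnorm u"
  have "0 < N" using False sqnorm_nonneg[of u] by (simp add: N_def)
  define v where "v = (\<lambda>i. (s / N) * u i)"
  have "(\<Sum>i\<in>UNIV. v i) = s\<^sup>2 / N"
    unfolding v_def by (simp add: s_def power2_eq_square flip: sum_distrib_left sum_divide_distrib)
  moreover have "sqnorm v = (s / N)\<^sup>2 * N"
    unfolding v_def N_def sqnorm_def power_mult_distrib sum_distrib_left ..
  moreover have "(s / N)\<^sup>2 * N = s\<^sup>2 / N"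
    using \<open>0 < N\<close> by (simp add: power2_eq_square)
  moreover have "quad_form A v = 0"
    unfolding v_def quad_form_scale using assms by simp
  ultimately have "s\<^sup>2 / N \<le> sph_null_sup A"
    using sph_null_sup_upper[of v A] by (simp add: sphS_def sqnorm_def)
  then show ?thesis using \<open>0 < N\<close> by (simp add: s_def N_def pos_divide_le_eq)
qed

lemma sph_null_sup_le:
  assumes "0 \<le> c" and null_bound: "\<And>u. quad_form A u = 0 \<Longrightarrow> (\<Sum>i\<in>UNIV. u i)\<^sup>2 \<le> c * sqnorm u"
  shows "sph_null_sup A \<le> c"
  unfolding sph_null_sup_def
proof (rule cSUP_least)
  show "{v \<in> sphS. quad_form A v = 0} \<noteq> {}"
    by (auto simp: sphS_def quad_form_def intro!: exI[of _ "\<lambda>_. 0"])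
next
  fix v assume "v \<in> {v \<in> sphS. quad_form A v = 0}"
  then have "(\<Sum>i\<in>UNIV. v i) = sqnorm v" and "quad_form A v = 0"
    by (simp_all add: sphS_def sqnorm_def)
  then have "sqnorm v * sqnorm v \<le> c * sqnorm v"
    using null_bound by (metis power2_eq_square)
  then show "sqnorm v \<le> c"
    using \<open>0 \<le> c\<close> sqnorm_nonneg[of v] by (cases "sqnorm v = 0") (auto simp: mult_le_cancel_right)
qed

lemma zero_diag_indefinite:
  assumes "sym_mat A" "\<And>i. A i i = 0" "A i j \<noteq> 0"
  obtains u x where "0 < quad_form A u" "quad_form A x < 0"
proof -
  have q: "quad_form A (\<lambda>k. unit_vec i k + t * unit_vec j k) = 2 * t * A i j" for t
    using assms(2) by (simp add: quad_form_line[OF assms(1)] quad_form_unit_vec bilin_form_unit_vec)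
  show ?thesis
  proof (rule that)
    show "0 < quad_form A (\<lambda>k. unit_vec i k + A i j * unit_vec j k)"
      unfolding q using assms(3) by (simp add: mult.assoc flip: power2_eq_square)
    show "quad_form A (\<lambda>k. unit_vec i k + (- A i j) * unit_vec j k) < 0"
      unfolding q using assms(3) by (simp add: mult.assoc flip: power2_eq_square)
  qed
qed

definition id_plus :: "real \<Rightarrow> real \<Rightarrow> ('a \<Rightarrow> 'a \<Rightarrow> real) \<Rightarrow> 'a \<Rightarrow> 'a \<Rightarrow> real" where
  "id_plus c l A = (\<lambda>i j. (if i = j then c else 0) + l * A i j)"

lemma psd_certificate:
  assumes "sym_mat A" "\<And>i. A i i = 0"
  shows "\<exists>l. psd_mat (\<lambda>i j. id_plus (sph_null_sup A) l A i j - 1)"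
proof -
  define F where "F = (\<lambda>i j :: 'a. (if i = j then sph_null_sup A else 0) - 1)"
  have "sym_mat F" by (simp add: F_def sym_mat_def)
  have null_nonneg: "0 \<le> quad_form F u" if "quad_form A u = 0" for u
    using sum_sq_le_sph_null_sup[OF that]
    by (simp add: F_def quad_form_diff quad_form_diag quad_form_ones mult.commute)
  have "\<exists>l. psd_mat (\<lambda>i j. F i j + l * A i j)"
  proof (cases "\<exists>i j. A i j \<noteq> 0")
    case True
    then obtain i j where "A i j \<noteq> 0" by blast
    with zero_diag_indefinite[OF assms] obtain u x where "0 < quad_form A u" "quad_form A x < 0" .
    from finsler[OF \<open>sym_mat F\<close> assms(1) null_nonneg this] show ?thesis .
  next
    case False
    then have "quad_form A u = 0" for u by (simp add: quad_form_def)
    with null_nonneg have "psd_mat (\<lambda>i j. F i j + 0 * A i j)" by (simp add: psd_mat_def)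
    then show ?thesis ..
  qed
  then show ?thesis by (simp add: F_def id_plus_def algebra_simps)
qed

subsection \<open>Positive semidefinite matrices and Kronecker products\<close>

lemma psd_mat_diag_nonneg: "psd_mat Q \<Longrightarrow> 0 \<le> Q x x"
  unfolding psd_mat_def by (metis quad_form_unit_vec)

lemma psd_mat_zero_diag_row:
  assumes "psd_mat Q" "sym_mat Q" "Q x x = 0"
  shows "Q x j = 0"
proof (rule ccontr)
  assume "Q x j \<noteq> 0"
  define t where "t = - (Q j j + 1) / (2 * Q j x)"
  have "Q j x \<noteq> 0" using \<open>Q x j \<noteq> 0\<close> assms(2) by (simp add: sym_mat_def)
  have "quad_form Q (\<lambda>k. unit_vec j k + t * unit_vec x k) = Q j j + 2 * t * Q j x"
    using assms(3) by (simp add: quad_form_line[OF assms(2)] quad_form_unit_vec bilin_form_unit_vec)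
  also have "\<dots> = -1" using \<open>Q j x \<noteq> 0\<close> by (simp add: t_def field_simps)
  finally show False using assms(1) unfolding psd_mat_def by (metis neg_0_le_iff_le not_one_le_zero)
qed

lemma psd_mat_schur_complement:
  assumes "psd_mat Q" "sym_mat Q" "0 < Q x x"
  shows "psd_mat (\<lambda>i j. Q i j - Q x i * Q x j / Q x x)"
  unfolding psd_mat_def
proof
  fix v
  define b where "b = (\<Sum>i\<in>UNIV. v i * Q x i)"
  have bilin: "bilin_form Q v (unit_vec x) = b"
    using assms(2) by (simp add: bilin_form_unit_vec_right b_def sym_mat_def)
  define t where "t = - b / Q x x"
  have "0 \<le> quad_form Q (\<lambda>k. v k + t * unit_vec x k)"
    using assms(1) by (simp add: psd_mat_def)
  also have "\<dots> = quad_form Q v + 2 * t * b + t\<^sup>2 * Q x x"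
    by (simp only: quad_form_line[OF assms(2)] bilin quad_form_unit_vec)
  also have "\<dots> = quad_form Q v - b\<^sup>2 / Q x x"
    using assms(3) by (simp add: t_def field_simps power2_eq_square)
  also have "b\<^sup>2 = (\<Sum>i\<in>UNIV. \<Sum>j\<in>UNIV. v i * (Q x i * Q x j) * v j)"
    unfolding b_def power2_eq_square sum_product by (simp add: mult_ac)
  also have "quad_form Q v - \<dots> / Q x x = quad_form (\<lambda>i j. Q i j - Q x i * Q x j / Q x x) v"
    unfolding quad_form_def
    by (simp add: right_diff_distrib left_diff_distrib sum_subtractf sum_divide_distrib)
  finally show "0 \<le> quad_form (\<lambda>i j. Q i j - Q x i * Q x j / Q x x) v" .
qed

lemma psd_mat_gram_supported:
  assumes "finite S" "sym_mat Q" "psd_mat Q" "\<And>i j. i \<notin> S \<Longrightarrow> Q i j = 0"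
  shows "\<exists>rs. \<forall>i j. Q i j = (\<Sum>r\<leftarrow>rs. r i * r j)"
  using assms
proof (induction S arbitrary: Q rule: finite_induct)
  case empty
  then show ?case by (intro exI[of _ "[]"]) simp
next
  case (insert x S)
  show ?case
  proof (cases "Q x x = 0")
    case True
    then have "Q i j = 0" if "i \<notin> S" for i j
      using insert.prems(2,3) psd_mat_zero_diag_row[OF insert.prems(2,1) True] that
      by (cases "i = x") auto
    then show ?thesis using insert.IH insert.prems by blast
  next
    case False
    then have "0 < Q x x" using psd_mat_diag_nonneg[OF insert.prems(2), of x] by linarith
    define Q' where "Q' = (\<lambda>i j. Q i j - Q x i * Q x j / Q x x)"
    have "sym_mat Q'"
      using insert.prems(1) by (simp add: Q'_def sym_mat_def mult.commute)
    moreover have "psd_mat Q'"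
      unfolding Q'_def using psd_mat_schur_complement[OF insert.prems(2,1) \<open>0 < Q x x\<close>] .
    moreover have "Q' i j = 0" if "i \<notin> S" for i j
    proof (cases "i = x")
      case False
      with that have "Q i j = 0" "Q i x = 0" using insert.prems(3) by auto
      moreover have "Q x i = Q i x" using insert.prems(1) by (simp add: sym_mat_def)
      ultimately show ?thesis by (simp add: Q'_def)
    qed (use \<open>0 < Q x x\<close> in \<open>simp add: Q'_def\<close>)
    ultimately obtain rs where rs: "\<forall>i j. Q' i j = (\<Sum>r\<leftarrow>rs. r i * r j)"
      using insert.IH by blast
    define r0 where "r0 = (\<lambda>i. Q x i / sqrt (Q x x))"
    have "r0 i * r0 j = Q x i * Q x j / Q x x" for i j
      using \<open>0 < Q x x\<close> by (simp add: r0_def)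
    then have "Q i j = r0 i * r0 j + Q' i j" for i j
      by (simp add: Q'_def)
    then have "\<forall>i j. Q i j = (\<Sum>r\<leftarrow>r0 # rs. r i * r j)"
      using rs by simp
    then show ?thesis ..
  qed
qed

lemma psd_mat_gram:
  fixes Q :: "'a::finite \<Rightarrow> 'a \<Rightarrow> real"
  assumes "sym_mat Q" "psd_mat Q"
  obtains rs where "Q = (\<lambda>i j. \<Sum>r\<leftarrow>rs. r i * r j)"
proof -
  obtain rs where "\<forall>i j. Q i j = (\<Sum>r\<leftarrow>rs. r i * r j)"
    using psd_mat_gram_supported[of UNIV Q] assms by auto
  then have "Q = (\<lambda>i j. \<Sum>r\<leftarrow>rs. r i * r j)" by (intro ext) simp
  then show ?thesis by (rule that)
qed

definition kron :: "('a \<Rightarrow> 'a \<Rightarrow> real) \<Rightarrow> ('b \<Rightarrow> 'b \<Rightarrow> real) \<Rightarrow> 'a \<times> 'b \<Rightarrow> 'a \<times> 'b \<Rightarrow> real" where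
  "kron P Q = (\<lambda>p q. P (fst p) (fst q) * Q (snd p) (snd q))"

lemma sum_UNIV_prod:
  "(\<Sum>p\<in>UNIV. f p) = (\<Sum>i\<in>UNIV. \<Sum>j\<in>UNIV. f (i, j))"
  by (simp add: sum.cartesian_product)

lemma quad_form_kron_rank_one:
  "quad_form (kron P (\<lambda>j j'. r j * r j')) w = quad_form P (\<lambda>i. \<Sum>j\<in>UNIV. w (i, j) * r j)"
proof -
  let ?term = "\<lambda>i j i' j'. w (i, j) * (P i i' * (r j * r j')) * w (i', j')"
  have "quad_form (kron P (\<lambda>j j'. r j * r j')) w
      = (\<Sum>i\<in>UNIV. \<Sum>j\<in>UNIV. \<Sum>i'\<in>UNIV. \<Sum>j'\<in>UNIV. ?term i j i' j')"
    by (simp add: quad_form_def kron_def sum_UNIV_prod)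
  also have "\<dots> = (\<Sum>i\<in>UNIV. \<Sum>i'\<in>UNIV. \<Sum>j\<in>UNIV. \<Sum>j'\<in>UNIV. ?term i j i' j')"
    by (rule sum.cong[OF refl], rule sum.swap)
  also have "\<dots> = quad_form P (\<lambda>i. \<Sum>j\<in>UNIV. w (i, j) * r j)"
    unfolding quad_form_def sum_distrib_left sum_distrib_right
    by (rule sum.cong[OF refl], rule sum.cong[OF refl], subst sum.swap) (simp add: mult_ac)
  finally show ?thesis .
qed

lemma psd_mat_kron:
  fixes P :: "'a::finite \<Rightarrow> 'a \<Rightarrow> real" and Q :: "'b::finite \<Rightarrow> 'b \<Rightarrow> real"
  assumes "psd_mat P" "psd_mat Q" "sym_mat Q"
  shows "psd_mat (kron P Q)"
proof -
  obtain rs where Q: "Q = (\<lambda>i j. \<Sum>r\<leftarrow>rs. r i * r j)"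
    using psd_mat_gram[OF assms(3,2)] .
  have "quad_form (kron P (\<lambda>i j. \<Sum>r\<leftarrow>rs. r i * r j)) w
      = (\<Sum>r\<leftarrow>rs. quad_form P (\<lambda>i. \<Sum>j\<in>UNIV. w (i, j) * r j))" for w
  proof (induction rs)
    case Nil
    then show ?case by (simp add: quad_form_def kron_def)
  next
    case (Cons r rs)
    have "kron P (\<lambda>i j. \<Sum>r\<leftarrow>r # rs. r i * r j)
        = (\<lambda>p q. kron P (\<lambda>i j. r i * r j) p q + kron P (\<lambda>i j. \<Sum>r\<leftarrow>rs. r i * r j) p q)"
      by (simp add: kron_def algebra_simps)
    then show ?case by (simp add: quad_form_add quad_form_kron_rank_one Cons)
  qed
  then show ?thesis
    unfolding Q psd_mat_def using assms(1) by (auto simp: psd_mat_def intro!: sum_list_nonneg)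
qed

lemma sum_sq_le_quad_form_kron:
  fixes X :: "'a::finite \<Rightarrow> 'a \<Rightarrow> real" and Y :: "'b::finite \<Rightarrow> 'b \<Rightarrow> real"
  assumes X: "psd_mat (\<lambda>i j. X i j - 1)" and Y: "psd_mat (\<lambda>i j. Y i j - 1)" and "sym_mat Y"
  shows "(\<Sum>p\<in>UNIV. v p)\<^sup>2 \<le> quad_form (kron X Y) v"
proof -
  let ?J = "\<lambda>(_ :: 'a) (_ :: 'a). 1 :: real"
  have "sym_mat (\<lambda>i j. Y i j - 1)" using \<open>sym_mat Y\<close> by (simp add: sym_mat_def)
  have "quad_form Y w = quad_form (\<lambda>i j. Y i j - 1) w + quad_form (\<lambda>_ _. 1) w" for w
    using quad_form_add[of "\<lambda>i j. Y i j - 1" "\<lambda>_ _. 1" w] by simp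
  then have "psd_mat Y" using Y psd_mat_ones unfolding psd_mat_def by (metis add_nonneg_nonneg)
  have "kron X Y = (\<lambda>p q. kron (\<lambda>i j. X i j - 1) Y p q
                           + kron ?J (\<lambda>i j. Y i j - 1) p q + 1)"
    by (simp add: kron_def fun_eq_iff algebra_simps)
  then have "quad_form (kron X Y) v = quad_form (kron (\<lambda>i j. X i j - 1) Y) v
      + quad_form (kron ?J (\<lambda>i j. Y i j - 1)) v + (\<Sum>p\<in>UNIV. v p)\<^sup>2"
    by (simp only: quad_form_add quad_form_ones)
  moreover have "0 \<le> quad_form (kron (\<lambda>i j. X i j - 1) Y) v"
    using psd_mat_kron[OF X \<open>psd_mat Y\<close> \<open>sym_mat Y\<close>] by (simp add: psd_mat_def)
  moreover have "0 \<le> quad_form (kron ?J (\<lambda>i j. Y i j - 1)) v"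
    using psd_mat_kron[OF psd_mat_ones[where 'a = 'a] Y \<open>sym_mat (\<lambda>i j. Y i j - 1)\<close>] by (simp add: psd_mat_def)
  ultimately show ?thesis by linarith
qed

subsection \<open>The strong product\<close>

lemma weighted_adj_strong_product_kron:
  assumes A: "weighted_adj G A" and B: "weighted_adj H B"
  shows "weighted_adj (strong_product G H)
           (\<lambda>p q. kron (id_plus a l A) (id_plus b m B) p q - (if p = q then a * b else 0))"
  unfolding weighted_adj_def
proof (intro conjI allI impI)
  fix p q :: "'a \<times> 'b"
  show "kron (id_plus a l A) (id_plus b m B) p q - (if p = q then a * b else 0)
      = kron (id_plus a l A) (id_plus b m B) q p - (if q = p then a * b else 0)"
    using A B by (auto simp: weighted_adj_def kron_def id_plus_def)
  show "kron (id_plus a l A) (id_plus b m B) p p - (if p = p then a * b else 0) = 0"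
    using A B by (simp add: weighted_adj_def kron_def id_plus_def)
  assume "p \<noteq> q \<and> \<not> strong_product G H p q"
  moreover obtain i j i' j' where "p = (i, j)" "q = (i', j')" by fastforce
  ultimately have "(i, j) \<noteq> (i', j')" and
    "\<not> ((G i i' \<and> H j j') \<or> (G i i' \<and> j = j') \<or> (i = i' \<and> H j j'))"
    by (auto simp: strong_product_def)
  then have "i \<noteq> i' \<and> \<not> G i i' \<or> j \<noteq> j' \<and> \<not> H j j'" by auto
  moreover have "id_plus a l A i i' = 0" if "i \<noteq> i'" "\<not> G i i'"
  proof -
    have "A i i' = 0" using A that unfolding weighted_adj_def by blast
    then show ?thesis using that by (simp add: id_plus_def)
  qed
  moreover have "id_plus b m B j j' = 0" if "j \<noteq> j'" "\<not> H j j'"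
  proof -
    have "B j j' = 0" using B that unfolding weighted_adj_def by blast
    then show ?thesis using that by (simp add: id_plus_def)
  qed
  ultimately have "id_plus a l A i i' = 0 \<or> id_plus b m B j j' = 0" by blast
  then show "kron (id_plus a l A) (id_plus b m B) p q - (if p = q then a * b else 0) = 0"
    using \<open>p \<noteq> q \<and> _\<close> \<open>p = (i, j)\<close> \<open>q = (i', j')\<close> by (auto simp: kron_def)
qed

lemma alpha_S_le_sph_null_sup:
  assumes "weighted_adj E C"
  shows "alpha_S E \<le> sph_null_sup C"
  unfolding alpha_S_eq_INF_sph_null_sup using assms sph_null_sup_nonneg
  by (intro cINF_lower bdd_belowI[of _ 0]) auto

lemma alpha_S_strong_product_le:
  assumes A: "weighted_adj G A" and B: "weighted_adj H B"
  shows "alpha_S (strong_product G H) \<le> sph_null_sup A * sph_null_sup B"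
proof -
  define a b where "a = sph_null_sup A" and "b = sph_null_sup B"
  have "sym_mat A" "sym_mat B" and diag: "\<And>i. A i i = 0" "\<And>j. B j j = 0"
    using A B by (simp_all add: weighted_adj_def sym_mat_def)
  obtain l where X: "psd_mat (\<lambda>i j. id_plus a l A i j - 1)"
    using psd_certificate[OF \<open>sym_mat A\<close> diag(1)] unfolding a_def by blast
  obtain m where Y: "psd_mat (\<lambda>i j. id_plus b m B i j - 1)"
    using psd_certificate[OF \<open>sym_mat B\<close> diag(2)] unfolding b_def by blast
  have "sym_mat (id_plus b m B)"
    using \<open>sym_mat B\<close> by (simp add: sym_mat_def id_plus_def)
  define C where "C = (\<lambda>p q. kron (id_plus a l A) (id_plus b m B) p q - (if p = q then a * b else 0))"
  have "sph_null_sup C \<le> a * b"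
  proof (rule sph_null_sup_le)
    show "0 \<le> a * b" by (simp add: a_def b_def sph_null_sup_nonneg)
    fix u assume "quad_form C u = 0"
    then have "quad_form (kron (id_plus a l A) (id_plus b m B)) u = a * b * sqnorm u"
      by (simp add: C_def quad_form_diff quad_form_diag)
    then show "(\<Sum>i\<in>UNIV. u i)\<^sup>2 \<le> a * b * sqnorm u"
      using sum_sq_le_quad_form_kron[OF X Y \<open>sym_mat (id_plus b m B)\<close>, of u] by simp
  qed
  moreover have "weighted_adj (strong_product G H) C"
    unfolding C_def using A B by (rule weighted_adj_strong_product_kron)
  ultimately show ?thesis
    using alpha_S_le_sph_null_sup by (fastforce simp: a_def b_def)
qed

lemma le_INF_mult_INF:
  fixes f :: "'a \<Rightarrow> real" and g :: "'b \<Rightarrow> real"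
  assumes "A \<noteq> {}" "B \<noteq> {}" "0 < c"
    and f_ge: "\<And>x. x \<in> A \<Longrightarrow> c \<le> f x" and g_ge: "\<And>y. y \<in> B \<Longrightarrow> c \<le> g y"
    and le_mult: "\<And>x y. x \<in> A \<Longrightarrow> y \<in> B \<Longrightarrow> z \<le> f x * g y"
  shows "z \<le> (INF x\<in>A. f x) * (INF y\<in>B. g y)"
proof -
  have "c \<le> (INF x\<in>A. f x)" using assms(1) f_ge by (rule cINF_greatest)
  then have pos_f: "0 < (INF x\<in>A. f x)" using \<open>0 < c\<close> by linarith
  have "z / (INF x\<in>A. f x) \<le> g y" if "y \<in> B" for y
  proof -
    have "0 < g y" using g_ge[OF that] \<open>0 < c\<close> by linarith
    have "z / g y \<le> (INF x\<in>A. f x)"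
      using assms(1) le_mult[OF _ that] \<open>0 < g y\<close> by (intro cINF_greatest) (simp_all add: divide_le_eq)
    then show ?thesis
      using \<open>0 < g y\<close> pos_f by (simp add: divide_le_eq mult.commute)
  qed
  then have "z / (INF x\<in>A. f x) \<le> (INF y\<in>B. g y)" using assms(2) by (intro cINF_greatest)
  then show ?thesis using pos_f by (simp add: divide_le_eq mult.commute)
qed

theorem lemma3:
  fixes G :: "'a::finite \<Rightarrow> 'a \<Rightarrow> bool" and H :: "'b::finite \<Rightarrow> 'b \<Rightarrow> bool"
  assumes "simple_graph G" and "simple_graph H"
  shows "alpha_S (strong_product G H) \<le> alpha_S G * alpha_S H"
  unfolding alpha_S_eq_INF_sph_null_sup[of G] alpha_S_eq_INF_sph_null_sup[of H]
proof (rule le_INF_mult_INF)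
  show "{A. weighted_adj G A} \<noteq> {}" "{B. weighted_adj H B} \<noteq> {}"
    by (auto simp: weighted_adj_def intro!: exI[of _ "\<lambda>_ _. 0"])
  show "1 \<le> sph_null_sup A" if "A \<in> {A. weighted_adj G A}" for A
    using that by (intro one_le_sph_null_sup) (simp add: weighted_adj_def)
  show "1 \<le> sph_null_sup B" if "B \<in> {B. weighted_adj H B}" for B
    using that by (intro one_le_sph_null_sup) (simp add: weighted_adj_def)
qed (auto intro: alpha_S_strong_product_le)

end
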